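(* For any $r\in\big(1,(\log n)/(2\log(3e/2))\big]$ and $\gamma>0$, \[ \sum_{i=1}^\infty\frac{n^\gamma\log i}{(i^r+n)^\gamma}\ge\frac{1}{3\cdot2^\gamma r}\,n^{1/r}\log n. \] *)

theory Defs
  imports Complex_Main
begin

end

theory Submission
  imports Defs
begin

text \<open>Put x = n^(1/r). Every index i \<le> x has i^r \<le> n, so its term is at least
  (log i) / 2^\<gamma>; hence the series dominates (log \<lfloor>x\<rfloor>!) / 2^\<gamma>. The bound
  log m! \<ge> m log m - m turns this into at least x log x / (3 \<cdot> 2^\<gamma>) once x \<ge> 9, and the
  hypothesis on r gives log x = (log n) / r \<ge> 2 log (3e/2) \<ge> log 9.\<close>

lemma sum_ln_Suc_ge:
  fixes m :: nat
  shows "real m * ln (real m) - real m \<le> (\<Sum>i<m. ln (real (Suc i)))"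
proof (induction m)
  case 0
  then show ?case by simp
next
  case (Suc m)
  show ?case
  proof (cases "m = 0")
    case True
    then show ?thesis by simp
  next
    case False
    then have m_pos: "real m > 0" by simp
    have "ln ((real m + 1) / real m) \<le> (real m + 1) / real m - 1"
      using m_pos by (intro ln_le_minus_one) simp
    then have "real m * (ln (real m + 1) - ln (real m)) \<le> 1"
      using m_pos by (simp add: ln_div field_simps)
    then have "(real m + 1) * ln (real m + 1) - (real m + 1)
        \<le> real m * ln (real m) - real m + ln (real m + 1)"
      by (simp add: algebra_simps)
    also have "\<dots> \<le> (\<Sum>i<m. ln (real (Suc i))) + ln (real (Suc m))"
      using Suc.IH by (simp add: add.commute)
    finally show ?thesis by (simp add: add.commute)
  qed
qed

lemma ln_nine_ge_two: "2 \<le> ln (9::real)"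
proof -
  have "exp 2 = exp (1::real) ^ 2" by (simp flip: exp_of_nat_mult)
  also have "\<dots> \<le> 3 ^ 2" using exp_le by (intro power_mono) auto
  finally show ?thesis by (simp add: ln_ge_iff)
qed

lemma floor_mult_ln_floor_ge:
  fixes x :: real
  assumes "9 \<le> x"
  defines "m \<equiv> real (nat \<lfloor>x\<rfloor>)"
  shows "x * ln x / 3 \<le> m * ln m - m"
proof -
  have m_le: "m \<le> x" and lt_m: "x < m + 1" and m_ge: "9 \<le> m"
    using assms by (auto simp: m_def le_nat_floor)
  then have m_large: "9/10 * x \<le> m" by linarith
  have "ln (9/10 * x) \<le> ln m"
    using m_large assms by simp
  moreover have "ln (9/10 * x) = ln (9/10) + ln x"
    using assms by (intro ln_mult_pos) auto
  ultimately have "ln (9/10) + ln x \<le> ln m" by simp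
  moreover have "ln (10/9::real) \<le> 10/9 - 1" by (rule ln_le_minus_one) simp
  ultimately have ln_m: "ln x - 1/9 \<le> ln m" by (simp add: ln_div)
  have ln_x: "2 \<le> ln x"
    using ln_nine_ge_two assms by (smt (verit) ln_le_cancel_iff)
  have "x * (ln x / 3) \<le> x * (9/10 * (ln x - 10/9))"
    using ln_x assms by (intro mult_left_mono) auto
  then have "x * ln x / 3 \<le> 9/10 * x * (ln x - 10/9)" by (simp add: algebra_simps)
  also have "\<dots> \<le> m * (ln x - 10/9)"
    using m_large ln_x by (intro mult_right_mono) auto
  also have "\<dots> \<le> m * (ln m - 1)"
    using ln_m m_ge by (intro mult_left_mono) auto
  finally show ?thesis by (simp add: algebra_simps)
qed

lemma div_two_powr_le_powr_mult_div:
  fixes a b N \<gamma> :: real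
  assumes "0 \<le> a" "0 \<le> b" "b \<le> N" "0 < N" "0 \<le> \<gamma>"
  shows "a / 2 powr \<gamma> \<le> N powr \<gamma> * a / (b + N) powr \<gamma>"
proof -
  have "(b + N) powr \<gamma> \<le> (2 * N) powr \<gamma>"
    using assms by (intro powr_mono2) auto
  moreover have "0 < (b + N) powr \<gamma>" using assms by simp
  ultimately have "N powr \<gamma> * a / (2 * N) powr \<gamma> \<le> N powr \<gamma> * a / (b + N) powr \<gamma>"
    using assms by (intro divide_left_mono) auto
  then show ?thesis using assms by (simp add: powr_mult)
qed

lemma suminf_ge_sum_ln_floor:
  fixes N r \<gamma> :: real
  defines "f \<equiv> \<lambda>i. N powr \<gamma> * ln (real (Suc i)) / (real (Suc i) powr r + N) powr \<gamma>"
  assumes "0 < N" "0 < r" "0 \<le> \<gamma>" "summable f"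
  shows "(\<Sum>i<nat \<lfloor>N powr (1/r)\<rfloor>. ln (real (Suc i))) / 2 powr \<gamma> \<le> suminf f"
proof -
  have term_ge: "ln (real (Suc i)) / 2 powr \<gamma> \<le> f i"
    if "i < nat \<lfloor>N powr (1/r)\<rfloor>" for i
  proof -
    have "real (Suc i) \<le> N powr (1/r)" using that by linarith
    then have "real (Suc i) powr r \<le> (N powr (1/r)) powr r"
      using assms by (intro powr_mono2) auto
    also have "\<dots> = N" using assms by (simp add: powr_powr)
    finally show ?thesis
      unfolding f_def using assms by (intro div_two_powr_le_powr_mult_div) auto
  qed
  have "(\<Sum>i<nat \<lfloor>N powr (1/r)\<rfloor>. ln (real (Suc i))) / 2 powr \<gamma>
      = (\<Sum>i<nat \<lfloor>N powr (1/r)\<rfloor>. ln (real (Suc i)) / 2 powr \<gamma>)"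
    by (simp add: sum_divide_distrib)
  also have "\<dots> \<le> (\<Sum>i<nat \<lfloor>N powr (1/r)\<rfloor>. f i)"
    using term_ge by (intro sum_mono) auto
  also have "\<dots> \<le> suminf f"
    using assms by (intro sum_le_suminf) (auto simp: f_def)
  finally show ?thesis .
qed

lemma ln_three_le_ln_three_halves_e: "ln 3 \<le> ln (3 * exp 1 / 2 :: real)"
  using exp_ge_add_one_self[of 1] by simp

theorem lemma8p3:
  fixes n :: nat and r \<gamma> :: real
  assumes "1 < r" and "r \<le> ln (real n) / (2 * ln (3 * exp 1 / 2))"
    and "\<gamma> > 0"
  shows "summable (\<lambda>i. real n powr \<gamma> * ln (real (Suc i)) / (real (Suc i) powr r + real n) powr \<gamma>)
     \<longrightarrow> 1 / (3 * 2 powr \<gamma> * r) * real n powr (1 / r) * ln (real n)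
         \<le> (\<Sum>i. real n powr \<gamma> * ln (real (Suc i)) / (real (Suc i) powr r + real n) powr \<gamma>)"
proof
  assume summable: "summable (\<lambda>i. real n powr \<gamma> * ln (real (Suc i)) / (real (Suc i) powr r + real n) powr \<gamma>)"
  define x where "x = real n powr (1 / r)"
  have "0 < ln (3::real)" by simp
  then have "2 * ln 3 * r \<le> 2 * ln (3 * exp 1 / 2) * r"
    using assms(1) ln_three_le_ln_three_halves_e by (intro mult_right_mono) auto
  also have "\<dots> \<le> ln (real n)"
    using assms(2) \<open>0 < ln 3\<close> ln_three_le_ln_three_halves_e
    by (simp add: pos_le_divide_eq mult.commute)
  finally have r_ln: "2 * ln 3 * r \<le> ln (real n)" .
  moreover have "0 < 2 * ln 3 * r" using \<open>0 < ln 3\<close> assms(1) by simp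
  ultimately have n_pos: "0 < real n" by (cases "n = 0") auto
  have ln_x: "ln x = ln (real n) / r" using n_pos by (simp add: x_def ln_powr)
  have "ln 9 \<le> ln x"
    using r_ln assms(1) ln_realpow[of 3 2] by (simp add: ln_x field_simps)
  moreover have "0 < x" using n_pos by (simp add: x_def)
  ultimately have "9 \<le> x" by simp
  have "1 / (3 * 2 powr \<gamma> * r) * real n powr (1 / r) * ln (real n) = x * ln x / 3 / 2 powr \<gamma>"
    using assms(1) by (simp add: ln_x x_def field_simps)
  also have "\<dots> \<le> (\<Sum>i<nat \<lfloor>x\<rfloor>. ln (real (Suc i))) / 2 powr \<gamma>"
    using floor_mult_ln_floor_ge[OF \<open>9 \<le> x\<close>] sum_ln_Suc_ge[of "nat \<lfloor>x\<rfloor>"]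
    by (intro divide_right_mono) auto
  also have "\<dots> \<le> (\<Sum>i. real n powr \<gamma> * ln (real (Suc i)) / (real (Suc i) powr r + real n) powr \<gamma>)"
    unfolding x_def using n_pos assms(1,3) summable by (intro suminf_ge_sum_ln_floor) auto
  finally show "1 / (3 * 2 powr \<gamma> * r) * real n powr (1 / r) * ln (real n)
         \<le> (\<Sum>i. real n powr \<gamma> * ln (real (Suc i)) / (real (Suc i) powr r + real n) powr \<gamma>)" .
qed

end
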